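(* Suppose $\omega\subseteq X\subseteq\beta\omega$ and $X$ is $(\mathfrak c,\omega^* )$-pseudocompact. Then $\operatorname{CL}(X)$ is pseudocompact.
   Context: $\beta\omega$ is the Stone–Čech compactification of the discrete space $\omega$ (ultrafilters on $\omega$), $\omega^*$ the set of free ultrafilters on $\omega$. For $p\in\omega^*$ and a sequence $(B_n:n\in\omega)$ of subsets of a space $X$, $x\in X$ is a $p$-limit of $(B_n)$ if $\{n:V\cap B_n\ne\emptyset\}\in p$ for every neighborhood $V$ of $x$. For a cardinal $\kappa$ and $M\subseteq\omega^*$, $X$ is $(\kappa,M)$-pseudocompact if for every family $\{(V^\alpha_n:n\in\omega):\alpha<\kappa\}$ of sequences of nonempty open subsets of $X$ there is $p\in M$ such that for every $\alpha<\kappa$ the sequence $(V^\alpha_n:n\in\omega)$ has a $p$-limit point in $X$. $\operatorname{CL}(X)$ is the set of nonempty closed subsets of $X$ with the Vietoris topology; pseudocompact means every continuous real-valued function is bounded. *)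

theory Defs
  imports "HOL-Analysis.Analysis"
begin

definition is_ultrafilter_nat :: "nat set set \<Rightarrow> bool" where
  "is_ultrafilter_nat p \<longleftrightarrow>
     UNIV \<in> p \<and> {} \<notin> p \<and>
     (\<forall>A B. A \<in> p \<and> A \<subseteq> B \<longrightarrow> B \<in> p) \<and>
     (\<forall>A B. A \<in> p \<and> B \<in> p \<longrightarrow> A \<inter> B \<in> p) \<and>
     (\<forall>A. A \<in> p \<or> - A \<in> p)"

definition beta_omega :: "nat set set set" where
  "beta_omega = {p. is_ultrafilter_nat p}"

text \<open>The principal ultrafilter at n (the copy of n in beta omega).\<close>
definition principal_uf :: "nat \<Rightarrow> nat set set" where
  "principal_uf n = {A. n \<in> A}"

definition omega_star :: "nat set set set" where
  "omega_star = {p \<in> beta_omega. \<Inter>p = {}}"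

definition beta_topology :: "nat set set topology" where
  "beta_topology = topology_generated_by {{p \<in> beta_omega. A \<in> p} | A. True}"

definition p_limit :: "'a topology \<Rightarrow> nat set set \<Rightarrow> (nat \<Rightarrow> 'a set) \<Rightarrow> 'a \<Rightarrow> bool" where
  "p_limit T p B x \<longleftrightarrow> x \<in> topspace T \<and>
     (\<forall>V. openin T V \<and> x \<in> V \<longrightarrow> {n. V \<inter> B n \<noteq> {}} \<in> p)"

text \<open>(kappa, M)-pseudocompactness, with kappa given as an index set K of cardinality kappa.\<close>
definition kappa_M_pseudocompact :: "'i set \<Rightarrow> nat set set set \<Rightarrow> 'a topology \<Rightarrow> bool" where
  "kappa_M_pseudocompact K M T \<longleftrightarrow>
     (\<forall>V :: 'i \<Rightarrow> nat \<Rightarrow> 'a set.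
        (\<forall>\<alpha>\<in>K. \<forall>n. openin T (V \<alpha> n) \<and> V \<alpha> n \<noteq> {}) \<longrightarrow>
        (\<exists>p\<in>M. \<forall>\<alpha>\<in>K. \<exists>x. p_limit T p (V \<alpha>) x))"

definition CL :: "'a topology \<Rightarrow> 'a set set" where
  "CL T = {F. closedin T F \<and> F \<noteq> {}}"

definition vietoris :: "'a topology \<Rightarrow> 'a set topology" where
  "vietoris T = topology_generated_by
     ({{F \<in> CL T. F \<subseteq> U} | U. openin T U} \<union> {{F \<in> CL T. F \<inter> U \<noteq> {}} | U. openin T U})"

definition pseudocompact :: "'a topology \<Rightarrow> bool" where
  "pseudocompact T \<longleftrightarrow>
     (\<forall>f. continuous_map T euclideanreal f \<longrightarrow> bounded (f ` topspace T))"

end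

theory Submission
  imports Defs "HOL-Library.Nat_Bijection"
begin

text \<open>The principal ultrafilters form a dense set of isolated points of \<open>X\<close>, so every nonempty
  Vietoris-open set contains a finite set of them. There are only \<open>\<mathfrak>c\<close> sequences in \<open>\<omega>\<close>,
  so \<open>(\<mathfrak>c,\<omega>\<^sup>*)\<close>-pseudocompactness yields a single free ultrafilter \<open>p\<close> for which every
  sequence in \<open>\<omega>\<close> has a \<open>p\<close>-limit in \<open>X\<close>. Given nonempty Vietoris-open sets \<open>U\<^sub>n\<close>, pick finite
  \<open>F\<^sub>n \<in> U\<^sub>n\<close>. The set \<open>L\<close> of \<open>p\<close>-limits of \<open>(F\<^sub>n)\<close> is closed and contains the \<open>p\<close>-limit of every
  selection from \<open>(F\<^sub>n)\<close>, hence is nonempty, and it is a \<open>p\<close>-limit of \<open>(U\<^sub>n)\<close> in \<open>CL(X)\<close>. Since a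
  free ultrafilter contains no finite set, such limits rule out unbounded continuous functions.\<close>

subsection \<open>Ultrafilters on \<open>\<omega>\<close>\<close>

lemma ultrafilter_nat_empty: "is_ultrafilter_nat p \<Longrightarrow> {} \<notin> p"
  by (simp add: is_ultrafilter_nat_def)

lemma ultrafilter_nat_mono: "is_ultrafilter_nat p \<Longrightarrow> A \<in> p \<Longrightarrow> A \<subseteq> B \<Longrightarrow> B \<in> p"
  unfolding is_ultrafilter_nat_def by blast

lemma ultrafilter_nat_Int: "is_ultrafilter_nat p \<Longrightarrow> A \<in> p \<Longrightarrow> B \<in> p \<Longrightarrow> A \<inter> B \<in> p"
  unfolding is_ultrafilter_nat_def by blast

lemma ultrafilter_nat_Int_iff: "is_ultrafilter_nat p \<Longrightarrow> A \<inter> B \<in> p \<longleftrightarrow> A \<in> p \<and> B \<in> p"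
  by (meson Int_lower1 Int_lower2 ultrafilter_nat_Int ultrafilter_nat_mono)

lemma ultrafilter_nat_Compl_iff:
  assumes "is_ultrafilter_nat p"
  shows "- A \<in> p \<longleftrightarrow> A \<notin> p"
proof
  assume "- A \<in> p"
  then show "A \<notin> p"
    using ultrafilter_nat_Int[OF assms, of A "- A"] ultrafilter_nat_empty[OF assms] by auto
qed (use assms in \<open>auto simp: is_ultrafilter_nat_def\<close>)

lemma ultrafilter_nat_Int_INT:
  assumes "is_ultrafilter_nat p" "finite E" "B \<in> p" "\<And>e. e \<in> E \<Longrightarrow> C e \<in> p"
  shows "B \<inter> (\<Inter>e\<in>E. C e) \<in> p"
  using assms(2,4)
proof (induction E rule: finite_induct)
  case (insert a E)
  then have "B \<inter> (\<Inter>e\<in>E. C e) \<inter> C a \<in> p"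
    using ultrafilter_nat_Int[OF assms(1)] by simp
  then show ?case
    by (simp add: Int_ac)
qed (use assms(3) in simp)

lemma omega_star_ultrafilter: "p \<in> omega_star \<Longrightarrow> is_ultrafilter_nat p"
  by (simp add: omega_star_def beta_omega_def)

lemma omega_star_finite_notin:
  assumes "p \<in> omega_star" "finite A"
  shows "A \<notin> p"
  using assms(2)
proof (induction A rule: finite_induct)
  case empty
  then show ?case
    using assms(1) by (simp add: omega_star_ultrafilter ultrafilter_nat_empty)
next
  case (insert a B)
  have uf: "is_ultrafilter_nat p"
    using assms(1) by (rule omega_star_ultrafilter)
  obtain C where C: "C \<in> p" "a \<notin> C"
    using assms(1) by (auto simp: omega_star_def)
  show ?case
  proof
    assume "insert a B \<in> p"
    then have "insert a B \<inter> C \<in> p"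
      using C(1) by (rule ultrafilter_nat_Int[OF uf])
    then have "B \<in> p"
      by (rule ultrafilter_nat_mono[OF uf]) (use C(2) in blast)
    with insert.IH show False
      by simp
  qed
qed

lemma principal_uf_in_beta_omega: "principal_uf n \<in> beta_omega"
  by (auto simp: principal_uf_def beta_omega_def is_ultrafilter_nat_def)

lemma singleton_in_ultrafilter_iff:
  assumes "p \<in> beta_omega"
  shows "{n} \<in> p \<longleftrightarrow> p = principal_uf n"
proof
  assume n: "{n} \<in> p"
  have uf: "is_ultrafilter_nat p"
    using assms by (simp add: beta_omega_def)
  have "A \<in> p \<longleftrightarrow> n \<in> A" for A
  proof
    assume "A \<in> p"
    then have "A \<inter> {n} \<in> p"
      using n by (rule ultrafilter_nat_Int[OF uf])
    then show "n \<in> A"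
      using ultrafilter_nat_empty[OF uf] by (metis Int_empty_right Int_insert_right)
  qed (use n ultrafilter_nat_mono[OF uf] in blast)
  then show "p = principal_uf n"
    by (auto simp: principal_uf_def)
qed (simp add: principal_uf_def)

subsection \<open>Limits along ultrafilters\<close>

lemma p_limit_mono:
  assumes "p_limit T p B x" "is_ultrafilter_nat p" "\<And>n. B n \<subseteq> C n"
  shows "p_limit T p C x"
  using assms unfolding p_limit_def by (blast intro: ultrafilter_nat_mono)

lemma closedin_p_limits: "closedin T {x. p_limit T p B x}"
proof -
  have "openin T (topspace T - {x. p_limit T p B x})"
  proof (subst openin_subopen, intro ballI)
    fix x assume "x \<in> topspace T - {x. p_limit T p B x}"
    then obtain V where V: "openin T V" "x \<in> V" "{n. V \<inter> B n \<noteq> {}} \<notin> p"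
      by (auto simp: p_limit_def)
    then have "V \<subseteq> topspace T - {x. p_limit T p B x}"
      using openin_subset by (fastforce simp: p_limit_def)
    with V show "\<exists>V. openin T V \<and> x \<in> V \<and> V \<subseteq> topspace T - {x. p_limit T p B x}"
      by blast
  qed
  then show ?thesis
    by (auto simp: closedin_def p_limit_def)
qed

lemma pseudocompact_if_free_p_limits:
  assumes "\<And>U. (\<And>n. openin T (U n) \<and> U n \<noteq> {}) \<Longrightarrow> \<exists>p\<in>omega_star. \<exists>x. p_limit T p U x"
  shows "pseudocompact T"
  unfolding pseudocompact_def
proof (intro allI impI)
  fix f assume f: "continuous_map T euclideanreal f"
  show "bounded (f ` topspace T)"
  proof (rule ccontr)
    assume unbounded: "\<not> bounded (f ` topspace T)"
    define U where "U n = {x \<in> topspace T. \<bar>f x\<bar> > real n}" for n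
    have "openin T (U n) \<and> U n \<noteq> {}" for n
    proof
      show "openin T (U n)"
        unfolding U_def using f
        by (intro openin_continuous_map_preimage[where U = "{y. \<bar>y\<bar> > real n}", simplified])
          (auto intro!: open_Collect_less continuous_intros)
      show "U n \<noteq> {}"
        using unbounded unfolding bounded_real U_def by (auto simp: not_less)
    qed
    then obtain p x where p: "p \<in> omega_star" and px: "p_limit T p U x"
      using assms by blast
    define W where "W = {y \<in> topspace T. \<bar>f y\<bar> < \<bar>f x\<bar> + 1}"
    have "openin T W"
      unfolding W_def using f
      by (intro openin_continuous_map_preimage[where U = "{y. \<bar>y\<bar> < \<bar>f x\<bar> + 1}", simplified])
        (auto intro!: open_Collect_less continuous_intros)
    moreover have "x \<in> W"
      using px by (auto simp: W_def p_limit_def)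
    ultimately have "{n. W \<inter> U n \<noteq> {}} \<in> p"
      using px by (auto simp: p_limit_def)
    moreover have "{n. W \<inter> U n \<noteq> {}} \<subseteq> {..nat \<lceil>\<bar>f x\<bar> + 1\<rceil>}"
      by (auto simp: W_def U_def nat_le_iff) linarith
    ultimately show False
      using omega_star_finite_notin[OF p] finite_subset by blast
  qed
qed

lemma real_indexed_pseudocompact_common_limit:
  fixes f :: "nat \<Rightarrow> 'a"
  assumes "kappa_M_pseudocompact (UNIV :: real set) M T" "\<And>n. openin T {f n}"
  shows "\<exists>p\<in>M. \<forall>s. range s \<subseteq> range f \<longrightarrow> (\<exists>x. p_limit T p (\<lambda>n. {s n}) x)"
proof -
  have "inj (\<lambda>s :: nat \<Rightarrow> nat. range (\<lambda>n. prod_encode (n, s n)))"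
  proof (rule injI, rule ext)
    fix s t :: "nat \<Rightarrow> nat" and n
    assume "range (\<lambda>n. prod_encode (n, s n)) = range (\<lambda>n. prod_encode (n, t n))"
    then have "prod_encode (n, s n) \<in> range (\<lambda>n. prod_encode (n, t n))"
      by (metis rangeI)
    then show "s n = t n"
      by (auto simp: prod_encode_eq)
  qed
  then have "(UNIV :: (nat \<Rightarrow> nat) set) \<lesssim> (UNIV :: nat set set)"
    unfolding lepoll_def by blast
  also have "(UNIV :: nat set set) \<approx> (UNIV :: real set)"
    by (rule nat_sets_eqpoll_reals)
  finally obtain g :: "real \<Rightarrow> nat \<Rightarrow> nat" where g: "surj g"
    by (auto simp: lepoll_iff)
  obtain p where p: "p \<in> M" and lim: "\<And>\<alpha>. \<exists>x. p_limit T p (\<lambda>n. {f (g \<alpha> n)}) x"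
    using assms unfolding kappa_M_pseudocompact_def by force
  have "\<exists>x. p_limit T p (\<lambda>n. {s n}) x" if s: "range s \<subseteq> range f" for s
  proof -
    obtain \<alpha> where \<alpha>: "g \<alpha> = (\<lambda>n. inv f (s n))"
      using g by (metis surjD)
    have "f (g \<alpha> n) = s n" for n
      using s by (simp add: \<alpha> f_inv_into_f image_subset_iff)
    then show ?thesis
      using lim[of \<alpha>] by simp
  qed
  with p show ?thesis
    by blast
qed

subsection \<open>The space \<open>\<beta>\<omega>\<close>\<close>

lemma topspace_beta_topology: "topspace beta_topology = beta_omega"
  unfolding beta_topology_def topology_generated_by_topspace
  by (auto simp: beta_omega_def is_ultrafilter_nat_def)

lemma openin_beta_topology_basic: "openin beta_topology {p \<in> beta_omega. A \<in> p}"
  unfolding beta_topology_def by (rule topology_generated_by_Basis) auto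

lemma beta_topology_basic_nbhd:
  assumes "openin beta_topology U" "x \<in> U"
  shows "\<exists>A\<in>x. {p \<in> beta_omega. A \<in> p} \<subseteq> U"
proof -
  have "generate_topology_on {{p \<in> beta_omega. A \<in> p} | A. True} U"
    using assms(1) unfolding beta_topology_def openin_topology_generated_by_iff .
  then have "\<forall>x\<in>U \<inter> beta_omega. \<exists>A\<in>x. {p \<in> beta_omega. A \<in> p} \<subseteq> U"
  proof (induction rule: generate_topology_on.induct)
    case (Int a b)
    show ?case
    proof
      fix y assume y: "y \<in> a \<inter> b \<inter> beta_omega"
      then obtain A B where "A \<in> y" "{p \<in> beta_omega. A \<in> p} \<subseteq> a"
        and "B \<in> y" "{p \<in> beta_omega. B \<in> p} \<subseteq> b"
        using Int.IH by blast
      with y show "\<exists>C\<in>y. {p \<in> beta_omega. C \<in> p} \<subseteq> a \<inter> b"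
        by (intro bexI[of _ "A \<inter> B"]) (auto simp: beta_omega_def ultrafilter_nat_Int_iff)
    qed
  next
    case (UN K)
    then show ?case
      by (meson UnionE Union_upper IntD1 IntD2 IntI subset_trans)
  next
    case (Basis s)
    then obtain A where "s = {p \<in> beta_omega. A \<in> p}"
      by blast
    then show ?case
      by blast
  qed simp
  then show ?thesis
    using assms openin_subset topspace_beta_topology by blast
qed

context
  fixes X :: "nat set set set"
  assumes X_beta: "X \<subseteq> beta_omega" and principal_X: "range principal_uf \<subseteq> X"
begin

lemma principal_uf_dense:
  assumes "openin (subtopology beta_topology X) U" "U \<noteq> {}"
  shows "U \<inter> range principal_uf \<noteq> {}"
proof -
  obtain S where S: "openin beta_topology S" "U = S \<inter> X"
    using assms(1) by (auto simp: openin_subtopology)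
  obtain x where "x \<in> S" "x \<in> X"
    using assms(2) S(2) by blast
  then obtain A where A: "A \<in> x" "{p \<in> beta_omega. A \<in> p} \<subseteq> S"
    using beta_topology_basic_nbhd[OF S(1)] by blast
  obtain n where "n \<in> A"
    using A(1) \<open>x \<in> X\<close> X_beta ultrafilter_nat_empty by (fastforce simp: beta_omega_def)
  then have "principal_uf n \<in> S"
    using A(2) principal_uf_in_beta_omega by (auto simp: principal_uf_def)
  then show ?thesis
    using principal_X S(2) by blast
qed

lemma openin_principal_uf_singleton: "openin (subtopology beta_topology X) {principal_uf n}"
proof -
  have "{principal_uf n} = {p \<in> beta_omega. {n} \<in> p} \<inter> X"
    using singleton_in_ultrafilter_iff principal_uf_in_beta_omega principal_X by blast
  then show ?thesis
    using openin_beta_topology_basic by (auto simp: openin_subtopology)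
qed

lemma closedin_principal_uf_singleton: "closedin (subtopology beta_topology X) {principal_uf n}"
proof -
  have "X - {principal_uf n} = {p \<in> beta_omega. - {n} \<in> p} \<inter> X"
    using X_beta singleton_in_ultrafilter_iff ultrafilter_nat_Compl_iff
    by (auto simp: beta_omega_def)
  then have "openin (subtopology beta_topology X) (X - {principal_uf n})"
    using openin_beta_topology_basic by (auto simp: openin_subtopology)
  then show ?thesis
    using X_beta principal_X topspace_beta_topology by (auto simp: closedin_def Int_absorb1)
qed

lemma closedin_finite_principal_ufs:
  assumes "finite F" "F \<subseteq> range principal_uf"
  shows "closedin (subtopology beta_topology X) F"
proof -
  have "closedin (subtopology beta_topology X) {q}" if "q \<in> F" for q
    using that assms(2) closedin_principal_uf_singleton by blast
  then have "closedin (subtopology beta_topology X) (\<Union>q\<in>F. {q})"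
    using assms(1) by (intro closedin_Union) auto
  then show ?thesis
    by simp
qed

end

subsection \<open>The Vietoris topology\<close>

lemma topspace_vietoris: "topspace (vietoris T) = CL T"
proof -
  let ?S = "{{F \<in> CL T. F \<subseteq> U} | U. openin T U} \<union> {{F \<in> CL T. F \<inter> U \<noteq> {}} | U. openin T U}"
  have "\<Union>?S \<subseteq> CL T"
    by (intro Union_least) auto
  moreover have "CL T \<subseteq> \<Union>?S"
  proof
    fix F assume F: "F \<in> CL T"
    have "{F \<in> CL T. F \<subseteq> topspace T} \<in> ?S"
      by blast
    moreover have "F \<in> {F \<in> CL T. F \<subseteq> topspace T}"
      using F by (simp add: CL_def closedin_subset)
    ultimately show "F \<in> \<Union>?S"
      by (rule UnionI)
  qed
  ultimately show ?thesis
    unfolding vietoris_def topology_generated_by_topspace by (rule antisym)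
qed

definition vietoris_box :: "'a topology \<Rightarrow> 'a set \<Rightarrow> 'a set set \<Rightarrow> 'a set set" where
  "vietoris_box T Q E = {H \<in> CL T. H \<subseteq> Q \<and> (\<forall>e\<in>E. H \<inter> e \<noteq> {})}"

definition has_vietoris_box :: "'a topology \<Rightarrow> 'a set set \<Rightarrow> 'a set \<Rightarrow> bool" where
  "has_vietoris_box T W G \<longleftrightarrow> (\<exists>Q E. openin T Q \<and> finite E \<and> (\<forall>e\<in>E. openin T e) \<and>
      G \<in> vietoris_box T Q E \<and> vietoris_box T Q E \<subseteq> W)"

lemma has_vietoris_boxE:
  assumes "has_vietoris_box T W G"
  obtains Q E where "openin T Q" "finite E" "\<forall>e\<in>E. openin T e"
    "G \<in> vietoris_box T Q E" "vietoris_box T Q E \<subseteq> W"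
  using assms unfolding has_vietoris_box_def by blast

lemma vietoris_box_Int:
  "vietoris_box T Q\<^sub>1 E\<^sub>1 \<inter> vietoris_box T Q\<^sub>2 E\<^sub>2 = vietoris_box T (Q\<^sub>1 \<inter> Q\<^sub>2) (E\<^sub>1 \<union> E\<^sub>2)"
  unfolding vietoris_box_def by blast

lemma has_vietoris_box_Int:
  assumes "has_vietoris_box T W\<^sub>1 G" "has_vietoris_box T W\<^sub>2 G"
  shows "has_vietoris_box T (W\<^sub>1 \<inter> W\<^sub>2) G"
proof -
  obtain Q\<^sub>1 E\<^sub>1 where 1: "openin T Q\<^sub>1" "finite E\<^sub>1" "\<forall>e\<in>E\<^sub>1. openin T e"
    "G \<in> vietoris_box T Q\<^sub>1 E\<^sub>1" "vietoris_box T Q\<^sub>1 E\<^sub>1 \<subseteq> W\<^sub>1"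
    using assms(1) by (rule has_vietoris_boxE)
  obtain Q\<^sub>2 E\<^sub>2 where 2: "openin T Q\<^sub>2" "finite E\<^sub>2" "\<forall>e\<in>E\<^sub>2. openin T e"
    "G \<in> vietoris_box T Q\<^sub>2 E\<^sub>2" "vietoris_box T Q\<^sub>2 E\<^sub>2 \<subseteq> W\<^sub>2"
    using assms(2) by (rule has_vietoris_boxE)
  have "G \<in> vietoris_box T (Q\<^sub>1 \<inter> Q\<^sub>2) (E\<^sub>1 \<union> E\<^sub>2)"
    using 1(4) 2(4) by (simp flip: vietoris_box_Int)
  moreover have "vietoris_box T (Q\<^sub>1 \<inter> Q\<^sub>2) (E\<^sub>1 \<union> E\<^sub>2) \<subseteq> W\<^sub>1 \<inter> W\<^sub>2"
    using 1(5) 2(5) by (auto simp flip: vietoris_box_Int)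
  moreover have "openin T (Q\<^sub>1 \<inter> Q\<^sub>2)"
    using 1(1) 2(1) by (rule openin_Int)
  moreover have "finite (E\<^sub>1 \<union> E\<^sub>2)" "\<forall>e\<in>E\<^sub>1 \<union> E\<^sub>2. openin T e"
    using 1(2,3) 2(2,3) by auto
  ultimately show ?thesis
    unfolding has_vietoris_box_def by blast
qed

lemma has_vietoris_box_self:
  "openin T Q \<Longrightarrow> finite E \<Longrightarrow> \<forall>e\<in>E. openin T e \<Longrightarrow> G \<in> vietoris_box T Q E \<Longrightarrow>
    has_vietoris_box T (vietoris_box T Q E) G"
  unfolding has_vietoris_box_def by blast

lemma has_vietoris_box_mono:
  "has_vietoris_box T W G \<Longrightarrow> W \<subseteq> W' \<Longrightarrow> has_vietoris_box T W' G"
  unfolding has_vietoris_box_def by (meson order_trans)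

lemma vietoris_box_subset_eq: "vietoris_box T U {} = {F \<in> CL T. F \<subseteq> U}"
  by (simp add: vietoris_box_def)

lemma vietoris_box_meets_eq: "vietoris_box T (topspace T) {U} = {F \<in> CL T. F \<inter> U \<noteq> {}}"
  by (auto simp: vietoris_box_def CL_def dest: closedin_subset)

lemma openin_vietoris_has_box:
  assumes "openin (vietoris T) W" "G \<in> W"
  shows "has_vietoris_box T W G"
proof -
  have "generate_topology_on
      ({{F \<in> CL T. F \<subseteq> U} | U. openin T U} \<union> {{F \<in> CL T. F \<inter> U \<noteq> {}} | U. openin T U}) W"
    using assms(1) unfolding vietoris_def openin_topology_generated_by_iff .
  then have "\<forall>G\<in>W. has_vietoris_box T W G"
  proof (induction rule: generate_topology_on.induct)
    case Empty
    show ?case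
      by simp
  next
    case (Int W\<^sub>1 W\<^sub>2)
    then show ?case
      by (simp add: has_vietoris_box_Int)
  next
    case (UN K)
    then show ?case
      by (meson UnionE Union_upper has_vietoris_box_mono)
  next
    case (Basis s)
    then obtain U where "openin T U" "s = vietoris_box T U {} \<or> s = vietoris_box T (topspace T) {U}"
      by (auto simp: vietoris_box_subset_eq vietoris_box_meets_eq)
    then show ?case
      using has_vietoris_box_self[of T U "{}"] has_vietoris_box_self[of T "topspace T" "{U}"] by auto
  qed
  with assms(2) show ?thesis
    by blast
qed

lemma vietoris_open_contains_finite_subset:
  assumes dense: "\<And>U. openin T U \<Longrightarrow> U \<noteq> {} \<Longrightarrow> U \<inter> D \<noteq> {}"
    and closed: "\<And>F. finite F \<Longrightarrow> F \<subseteq> D \<Longrightarrow> closedin T F"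
    and W: "openin (vietoris T) W" "W \<noteq> {}"
  shows "\<exists>F. finite F \<and> F \<noteq> {} \<and> F \<subseteq> D \<and> F \<in> W"
proof -
  obtain G where "G \<in> W"
    using W(2) by blast
  obtain Q E where Q: "openin T Q" and E: "finite E" "\<forall>e\<in>E. openin T e"
    and G: "G \<in> vietoris_box T Q E" and box_W: "vietoris_box T Q E \<subseteq> W"
    using openin_vietoris_has_box[OF W(1) \<open>G \<in> W\<close>] by (rule has_vietoris_boxE)
  have "G \<noteq> {}" "G \<subseteq> Q" "\<forall>e\<in>E. G \<inter> e \<noteq> {}"
    using G by (simp_all add: vietoris_box_def CL_def)
  then have "Q \<inter> D \<noteq> {}"
    using dense[OF Q] by blast
  then obtain d where d: "d \<in> Q \<inter> D"
    by blast
  have "\<exists>c. c \<in> Q \<inter> e \<inter> D" if "e \<in> E" for e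
  proof -
    have "openin T (Q \<inter> e)"
      using Q E(2) that by blast
    moreover have "Q \<inter> e \<noteq> {}"
      using \<open>G \<subseteq> Q\<close> \<open>\<forall>e\<in>E. G \<inter> e \<noteq> {}\<close> that by blast
    ultimately show ?thesis
      using dense by blast
  qed
  then obtain c where c: "\<forall>e\<in>E. c e \<in> Q \<inter> e \<inter> D"
    by metis
  define F where "F = insert d (c ` E)"
  have "finite F" "F \<noteq> {}" "F \<subseteq> D" "F \<subseteq> Q" "\<forall>e\<in>E. F \<inter> e \<noteq> {}"
    using E(1) c d unfolding F_def by blast+
  then have "F \<in> vietoris_box T Q E"
    using closed by (simp add: vietoris_box_def CL_def)
  then show ?thesis
    using box_W \<open>finite F\<close> \<open>F \<noteq> {}\<close> \<open>F \<subseteq> D\<close> by blast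
qed

lemma eventually_subset_if_selections_converge:
  assumes p: "is_ultrafilter_nat p" and F: "\<And>n. F n \<noteq> {}"
    and sel: "\<And>s. (\<And>n. s n \<in> F n) \<Longrightarrow> \<exists>x. p_limit T p (\<lambda>n. {s n}) x"
    and Q: "openin T Q" "{x. p_limit T p F x} \<subseteq> Q"
  shows "{n. F n \<subseteq> Q} \<in> p"
proof -
  \<comment> \<open>Select a point outside \<open>Q\<close> whenever \<open>F n\<close> has one; its \<open>p\<close>-limit lies in \<open>Q\<close>.\<close>
  define s where "s n = (SOME a. a \<in> F n \<and> (F n \<subseteq> Q \<or> a \<notin> Q))" for n
  have "s n \<in> F n \<and> (F n \<subseteq> Q \<or> s n \<notin> Q)" for n
    unfolding s_def by (rule someI_ex) (use F in blast)
  then have s: "\<And>n. s n \<in> F n" and s_out: "\<And>n. s n \<in> Q \<Longrightarrow> F n \<subseteq> Q"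
    by blast+
  obtain x where x: "p_limit T p (\<lambda>n. {s n}) x"
    using sel s by blast
  have "x \<in> Q"
    using Q(2) p_limit_mono[OF x p, of F] s by blast
  then have "{n. Q \<inter> {s n} \<noteq> {}} \<in> p"
    using x Q(1) by (simp add: p_limit_def)
  then show ?thesis
    by (rule ultrafilter_nat_mono[OF p]) (use s_out in blast)
qed

lemma vietoris_p_limit_of_p_limits:
  assumes p: "is_ultrafilter_nat p" and F: "\<And>n. F n \<in> CL T"
    and sel: "\<And>s. (\<And>n. s n \<in> F n) \<Longrightarrow> \<exists>x. p_limit T p (\<lambda>n. {s n}) x"
  shows "p_limit (vietoris T) p (\<lambda>n. {F n}) {x. p_limit T p F x}"
proof -
  let ?L = "{x. p_limit T p F x}"
  have F_ne: "\<And>n. F n \<noteq> {}"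
    using F by (simp add: CL_def)
  then have some: "(SOME a. a \<in> F n) \<in> F n" for n
    by (simp add: some_in_eq)
  obtain x where x: "p_limit T p (\<lambda>n. {SOME a. a \<in> F n}) x"
    using sel[of "\<lambda>n. SOME a. a \<in> F n", OF some] by blast
  have "p_limit T p F x"
    by (rule p_limit_mono[OF x p]) (simp add: some)
  then have "?L \<in> CL T"
    using closedin_p_limits[of T p F] by (auto simp: CL_def)
  moreover have "{n. W \<inter> {F n} \<noteq> {}} \<in> p" if W: "openin (vietoris T) W" "?L \<in> W" for W
  proof -
    obtain Q E where Q: "openin T Q" and E: "finite E" "\<forall>e\<in>E. openin T e"
      and L: "?L \<in> vietoris_box T Q E" and box_W: "vietoris_box T Q E \<subseteq> W"
      using openin_vietoris_has_box[OF W] by (rule has_vietoris_boxE)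
    have "?L \<subseteq> Q"
      using L by (simp add: vietoris_box_def)
    have "{n. F n \<subseteq> Q} \<in> p"
      using p F_ne sel Q \<open>?L \<subseteq> Q\<close> by (rule eventually_subset_if_selections_converge)
    moreover have "{n. F n \<inter> e \<noteq> {}} \<in> p" if e: "e \<in> E" for e
    proof -
      obtain y where "p_limit T p F y" "y \<in> e"
        using L e by (auto simp: vietoris_box_def)
      then show ?thesis
        using E(2) e by (simp add: p_limit_def Int_commute)
    qed
    ultimately have "{n. F n \<subseteq> Q} \<inter> (\<Inter>e\<in>E. {n. F n \<inter> e \<noteq> {}}) \<in> p"
      by (rule ultrafilter_nat_Int_INT[OF p E(1)])
    moreover have "{n. F n \<subseteq> Q} \<inter> (\<Inter>e\<in>E. {n. F n \<inter> e \<noteq> {}}) \<subseteq> {n. W \<inter> {F n} \<noteq> {}}"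
    proof
      fix n assume "n \<in> {n. F n \<subseteq> Q} \<inter> (\<Inter>e\<in>E. {n. F n \<inter> e \<noteq> {}})"
      then have "F n \<in> vietoris_box T Q E"
        using F[of n] by (simp add: vietoris_box_def)
      then show "n \<in> {n. W \<inter> {F n} \<noteq> {}}"
        using box_W by blast
    qed
    ultimately show ?thesis
      by (rule ultrafilter_nat_mono[OF p])
  qed
  ultimately show ?thesis
    unfolding p_limit_def topspace_vietoris by blast
qed

theorem corollary3p3:
  fixes X :: "nat set set set"
  assumes "range principal_uf \<subseteq> X" and "X \<subseteq> beta_omega"
    and "kappa_M_pseudocompact (UNIV :: real set) omega_star (subtopology beta_topology X)"
  shows "pseudocompact (vietoris (subtopology beta_topology X))"
proof (rule pseudocompact_if_free_p_limits)
  let ?T = "subtopology beta_topology X"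
  fix U :: "nat \<Rightarrow> nat set set set set"
  assume U: "\<And>n. openin (vietoris ?T) (U n) \<and> U n \<noteq> {}"
  obtain p where p: "p \<in> omega_star"
    and lim: "\<And>s. range s \<subseteq> range principal_uf \<Longrightarrow> \<exists>x. p_limit ?T p (\<lambda>n. {s n}) x"
    using real_indexed_pseudocompact_common_limit[where f = principal_uf, OF assms(3)
        openin_principal_uf_singleton[OF assms(2,1)]]
    by blast
  have "\<exists>F. finite F \<and> F \<noteq> {} \<and> F \<subseteq> range principal_uf \<and> F \<in> U n" for n
  proof (rule vietoris_open_contains_finite_subset)
    show "openin (vietoris ?T) (U n)" "U n \<noteq> {}"
      using U by auto
  qed (use principal_uf_dense[OF assms(2,1)] closedin_finite_principal_ufs[OF assms(2,1)] in auto)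
  then obtain F where F: "\<And>n. finite (F n) \<and> F n \<noteq> {} \<and> F n \<subseteq> range principal_uf \<and> F n \<in> U n"
    by metis
  have "p_limit (vietoris ?T) p (\<lambda>n. {F n}) {x. p_limit ?T p F x}"
  proof (rule vietoris_p_limit_of_p_limits[OF omega_star_ultrafilter[OF p]])
    show "F n \<in> CL ?T" for n
      using closedin_finite_principal_ufs[OF assms(2,1)] F by (simp add: CL_def)
    show "\<exists>x. p_limit ?T p (\<lambda>n. {s n}) x" if "\<And>n. s n \<in> F n" for s
      by (rule lim) (use that F in blast)
  qed
  then have "p_limit (vietoris ?T) p U {x. p_limit ?T p F x}"
    using omega_star_ultrafilter[OF p] by (rule p_limit_mono) (use F in simp)
  with p show "\<exists>p\<in>omega_star. \<exists>L. p_limit (vietoris ?T) p U L"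
    by blast
qed

end
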